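(* Let $\pi\in\mathcal{S}_n$ be an arbitrary permutation. (a) For every $r\ge0$ and every $(i,j)\in\mathcal{E}_r(\pi)$ we have $i+j\le n+r$. (b) Let $(i,j)\in D(\pi)$ be a diagram square of rank $1$ such that $(i-1,j)\notin D(\pi)$ and $(i,j-1)\notin D(\pi)$. Then $\pi_{i-1}=j-1$. Furthermore, for any $(i,j)\in\mathcal{E}_1(\pi)$ there is no $(i',j')\in\mathcal{E}(\pi)$ with $i'<i$ and $j'<j$.
   Context: Represent $\pi\in\mathcal{S}_n$ by an $n\times n$ array, rows $i=1,\dots,n$ numbered top to bottom and columns $j=1,\dots,n$ left to right, with a dot in square $(i,\pi_i)$. The diagram $D(\pi)$ is the set of squares $(i,j)$ with $\pi_i>j$ and $\pi^{-1}(j)>i$; its elements are diagram squares. The essential set $\mathcal{E}(\pi)$ is the set of $(i,j)\in D(\pi)$ with $(i+1,j)\notin D(\pi)$ and $(i,j+1)\notin D(\pi)$ (squares outside the array count as not in $D(\pi)$). The rank of a square $(i,j)$ is $\rho(i,j)=\#\{k<i:\pi_k<j\}$ (number of dots strictly northwest), and $\mathcal{E}_r(\pi)=\{(i,j)\in\mathcal{E}(\pi):\rho(i,j)=r\}$. *)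

theory Defs
  imports "HOL-Combinatorics.Permutations"
begin

text \<open>A permutation pi of {1..n} is a function p :: nat => nat with p permutes {1..n};
  the dot of row i is in column p i. Squares are pairs (i,j), i = row, j = column.\<close>

definition diagram :: "(nat \<Rightarrow> nat) \<Rightarrow> nat \<Rightarrow> (nat \<times> nat) set" where
  "diagram p n = {(i,j). i \<in> {1..n} \<and> j \<in> {1..n} \<and> p i > j \<and> inv p j > i}"

definition rank :: "(nat \<Rightarrow> nat) \<Rightarrow> nat \<Rightarrow> nat \<Rightarrow> nat" where
  "rank p i j = card {k. 1 \<le> k \<and> k < i \<and> p k < j}"

definition essential :: "(nat \<Rightarrow> nat) \<Rightarrow> nat \<Rightarrow> (nat \<times> nat) set" where
  "essential p n = {(i,j). (i,j) \<in> diagram p n \<and> (i+1,j) \<notin> diagram p n \<and> (i,j+1) \<notin> diagram p n}"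

definition essential_r :: "(nat \<Rightarrow> nat) \<Rightarrow> nat \<Rightarrow> nat \<Rightarrow> (nat \<times> nat) set" where
  "essential_r p n r = {(i,j). (i,j) \<in> essential p n \<and> rank p i j = r}"

end

theory Submission
  imports Defs
begin

text \<open>
  Everything is read off the dots northwest of a square, which rank counts. For (a),
  each of the rows 1, ..., i of a diagram square (i,j) has its dot either northwest
  of (i,j) or strictly east of column j, and at most n - j rows can do the latter.
  For (b), the boundary conditions on a square (row above, column to the left, or an
  essential square further northwest) each produce dots northwest of (i,j); rank 1
  forces these dots to coincide.
\<close>

lemma rank_one_unique:
  assumes "rank p i j = 1"
    and "1 \<le> k" "k < i" "p k < j"
    and "1 \<le> k'" "k' < i" "p k' < j"
  shows "k = k'"
proof -
  have "card {m. 1 \<le> m \<and> m < i \<and> p m < j} = 1"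
    using assms(1) by (simp add: rank_def)
  then obtain a where nw: "{m. 1 \<le> m \<and> m < i \<and> p m < j} = {a}"
    by (rule card_1_singletonE)
  have "k \<in> {a}" "k' \<in> {a}"
    unfolding nw[symmetric] using assms(2-) by simp_all
  then show ?thesis by simp
qed

lemma rank_pos_obtain:
  assumes "rank p i j > 0"
  obtains k where "1 \<le> k" "k < i" "p k < j"
  using assms by (auto simp: rank_def card_gt_0_iff)

lemma not_in_diagram_dot_west:
  assumes "p permutes {1..n}" "i \<in> {1..n}" "j \<in> {1..n}"
    and "(i,j) \<notin> diagram p n" "i \<le> inv p j"
  shows "p i \<le> j"
proof (rule ccontr)
  assume "\<not> p i \<le> j"
  with assms have "inv p j = i"
    by (auto simp: diagram_def)
  with assms(1) \<open>\<not> p i \<le> j\<close> show False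
    by (simp add: permutes_inv_eq)
qed

lemma not_in_diagram_dot_north:
  assumes "p permutes {1..n}" "i \<in> {1..n}" "j \<in> {1..n}"
    and "(i,j) \<notin> diagram p n" "j \<le> p i"
  shows "inv p j \<le> i"
proof (rule ccontr)
  assume "\<not> inv p j \<le> i"
  with assms have "p i = j"
    by (auto simp: diagram_def)
  with assms(1) have "inv p j = i"
    by (simp add: permutes_inv_eq)
  with \<open>\<not> inv p j \<le> i\<close> show False by simp
qed

lemma diagram_rank_bound:
  assumes p: "p permutes {1..n}" and ij: "(i,j) \<in> diagram p n"
  shows "i + j \<le> n + rank p i j"
proof -
  have d: "i \<le> n" "j \<le> n" "j < p i" "i < inv p j"
    using ij by (auto simp: diagram_def)
  define NW where "NW = {k. 1 \<le> k \<and> k < i \<and> p k < j}"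
  define E where "E = {k. 1 \<le> k \<and> k \<le> i \<and> j < p k}"
  have "{1..i} \<subseteq> NW \<union> E"
  proof
    fix k assume k: "k \<in> {1..i}"
    have "p k \<noteq> j"
      using k d(4) permutes_inverses(2)[OF p, of k] by auto
    then have "p k < j \<or> j < p k"
      by linarith
    moreover have "k < i \<or> k = i"
      using k by auto
    ultimately show "k \<in> NW \<union> E"
      using k d(3) unfolding NW_def E_def by auto
  qed
  moreover have "finite (NW \<union> E)"
    by (simp add: NW_def E_def)
  ultimately have "card {1..i} \<le> card (NW \<union> E)"
    by (rule card_mono[rotated])
  also have "\<dots> \<le> card NW + card E"
    by (rule card_Un_le)
  finally have "i \<le> card NW + card E"
    by simp
  moreover have "card E \<le> n - j"
  proof -
    have "p ` E \<subseteq> {j<..n}"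
    proof
      fix y assume "y \<in> p ` E"
      then obtain k where k: "k \<in> E" "y = p k" by blast
      then have "k \<in> {1..n}"
        using d(1) by (simp add: E_def)
      then have "p k \<in> {1..n}"
        by (simp only: permutes_in_image[OF p])
      with k show "y \<in> {j<..n}"
        by (simp add: E_def)
    qed
    moreover have "inj_on p E"
      using permutes_inj[OF p] by (rule inj_on_subset) simp
    ultimately show ?thesis
      using card_inj_on_le[of p E "{j<..n}"] by simp
  qed
  moreover have "rank p i j = card NW"
    by (simp add: rank_def NW_def)
  ultimately show ?thesis
    using d(2) by linarith
qed

lemma rank_one_corner:
  assumes p: "p permutes {1..n}" and ij: "(i,j) \<in> diagram p n" and r: "rank p i j = 1"
    and up: "(i-1,j) \<notin> diagram p n" and left: "(i,j-1) \<notin> diagram p n"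
  shows "p (i-1) = j-1"
proof -
  have d: "i \<le> n" "j \<le> n" "j < p i" "i < inv p j"
    using ij by (auto simp: diagram_def)
  obtain a where a: "1 \<le> a" "a < i" "p a < j"
    using rank_pos_obtain[of p i j] r by auto
  have "a \<in> {1..n}"
    using a d(1) by simp
  then have "p a \<in> {1..n}"
    by (simp only: permutes_in_image[OF p])
  then have ij2: "2 \<le> i" "2 \<le> j"
    using a by auto
  have "p (i-1) \<le> j"
    by (rule not_in_diagram_dot_west[OF p _ _ up]) (use ij2 d in auto)
  moreover have "p (i-1) \<noteq> j"
    using d(4) permutes_inverses(2)[OF p, of "i-1"] by auto
  ultimately have row_above: "p (i-1) < j"
    by simp
  define k where "k = inv p (j-1)"
  have pk: "p k = j-1"
    unfolding k_def by (rule permutes_inverses(1)[OF p])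
  have "k \<le> i"
    unfolding k_def
    by (rule not_in_diagram_dot_north[OF p _ _ left]) (use ij2 d in auto)
  moreover have "k \<noteq> i"
    using pk d(3) by auto
  moreover have "k \<in> {1..n}"
    using ij2 d(2) unfolding k_def permutes_in_image[OF permutes_inv[OF p]] by auto
  ultimately have "i-1 = k"
    using rank_one_unique[OF r _ _ row_above, of k] ij2 pk by force
  with pk show ?thesis
    by simp
qed

lemma rank_one_no_essential_northwest:
  assumes p: "p permutes {1..n}" and ij: "(i,j) \<in> diagram p n" and r: "rank p i j = 1"
    and ess: "(i',j') \<in> essential p n" and lt: "i' < i" "j' < j"
  shows False
proof -
  have d: "i \<le> n" "j \<le> n" "j < p i" "i < inv p j"
    using ij by (auto simp: diagram_def)
  have d': "1 \<le> i'" "1 \<le> j'" "j' < p i'" "i' < inv p j'"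
    and below: "(i'+1,j') \<notin> diagram p n" and right: "(i',j'+1) \<notin> diagram p n"
    using ess by (auto simp: essential_def diagram_def)
  have row_below: "p (i'+1) \<le> j'"
    by (rule not_in_diagram_dot_west[OF p _ _ below]) (use d d' lt in auto)
  then have "i'+1 \<noteq> i"
    using d(3) lt by auto
  with lt have "i'+1 < i"
    by simp
  define k where "k = inv p (j'+1)"
  have pk: "p k = j'+1"
    unfolding k_def by (rule permutes_inverses(1)[OF p])
  have "k \<le> i'"
    unfolding k_def
    by (rule not_in_diagram_dot_north[OF p _ _ right]) (use d d' lt in auto)
  then have "j'+1 \<noteq> j"
    using d(4) lt unfolding k_def by auto
  with pk lt have "p k < j"
    by simp
  have "j'+1 \<in> {1..n}"
    using d(2) lt by auto
  then have "k \<in> {1..n}"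
    unfolding k_def by (simp only: permutes_in_image[OF permutes_inv[OF p]])
  then have "i'+1 = k"
    using rank_one_unique[OF r, of "i'+1" k] \<open>i'+1 < i\<close> row_below lt
      \<open>k \<le> i'\<close> \<open>p k < j\<close> by force
  with \<open>k \<le> i'\<close> show False
    by simp
qed

theorem lemma2p2:
  fixes p :: "nat \<Rightarrow> nat" and n :: nat
  assumes "p permutes {1..n}"
  shows "(\<forall>r i j. (i,j) \<in> essential_r p n r \<longrightarrow> i + j \<le> n + r)
    \<and> (\<forall>i j. (i,j) \<in> diagram p n \<and> rank p i j = 1
          \<and> (i-1,j) \<notin> diagram p n \<and> (i,j-1) \<notin> diagram p n
          \<longrightarrow> p (i-1) = j-1)
    \<and> (\<forall>i j. (i,j) \<in> essential_r p n 1 \<longrightarrow>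
          \<not> (\<exists>i' j'. (i',j') \<in> essential p n \<and> i' < i \<and> j' < j))"
proof (intro conjI allI impI)
  fix r i j
  assume "(i,j) \<in> essential_r p n r"
  then show "i + j \<le> n + r"
    using diagram_rank_bound[OF assms] by (auto simp: essential_r_def essential_def)
next
  fix i j
  assume "(i,j) \<in> diagram p n \<and> rank p i j = 1
    \<and> (i-1,j) \<notin> diagram p n \<and> (i,j-1) \<notin> diagram p n"
  then show "p (i-1) = j-1"
    using rank_one_corner[OF assms] by blast
next
  fix i j
  assume "(i,j) \<in> essential_r p n 1"
  then show "\<not> (\<exists>i' j'. (i',j') \<in> essential p n \<and> i' < i \<and> j' < j)"
    using rank_one_no_essential_northwest[OF assms]
    by (auto simp: essential_r_def essential_def)
qed

end
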